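(* Consider the setting described in the context, fix a state $\boldsymbol{x}\in\mathcal{R}_r$ (so region $r$ is the active one), constants $\rho>0$, $\lambda>0$, $\beta_r\ge 0$, and a class $\mathcal{K}$ function $\alpha$. Suppose $m_r^V,m_r^h$ are the Gaussian-process posterior means and $\sigma_r^V,\sigma_r^h$ the posterior standard deviations given by the formulas in the context. Then the optimization problem in the variables $(\boldsymbol{u},d)\in\mathbb{R}^m\times\mathbb{R}$ $$\min_{\boldsymbol{u},d}\ \|\boldsymbol{u}\|_2^2+\rho d^2$$ subject to $$\hat{\dot V}(\boldsymbol{x},\boldsymbol{u})+m_r^V(\boldsymbol{x},\boldsymbol{u})+\beta_r\sigma_r^V(\boldsymbol{x},\boldsymbol{u})+\lambda V(\boldsymbol{x})\le d,$$ $$\hat{\dot h}(\boldsymbol{x},\boldsymbol{u})+m_r^h(\boldsymbol{x},\boldsymbol{u})-\beta_r\sigma_r^h(\boldsymbol{x},\boldsymbol{u})+\alpha(h(\boldsymbol{x}))\ge 0$$ is convex and can be converted into an equivalent standard second-order cone program of the form $$\min_{\boldsymbol{z}}\ \boldsymbol{f}^T\boldsymbol{z}\quad\text{s.t.}\quad \|M^i\boldsymbol{z}+\boldsymbol{n}^i\|_2\le (\boldsymbol{p}^i)^T\boldsymbol{z}+q^i,\quad i=1,\dots,n_c,$$ for a vector variable $\boldsymbol{z}\in\mathbb{R}^{n_z}$ and suitable (state-dependent) $\boldsymbol{f}$, matrices $M^i$, vectors $\boldsymbol{n}^i,\boldsymbol{p}^i$ and scalars $q^i$.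
   Context: Setting: a switching control-affine system $\dot{\boldsymbol{x}}=\sum_{r=1}^R\delta_r(f_r(\boldsymbol{x})+g_r(\boldsymbol{x})\boldsymbol{u})$ with state $\boldsymbol{x}\in\mathcal{X}\subset\mathbb{R}^n$ ($\mathcal{X}$ compact and convex) and input $\boldsymbol{u}\in\mathbb{R}^m$, where $\mathcal{R}_1,\dots,\mathcal{R}_R$ are pairwise disjoint sets covering $\mathcal{X}$ and $\delta_r(\boldsymbol{x})=1$ if $\boldsymbol{x}\in\mathcal{R}_r$ and $0$ otherwise. A nominal model $\dot{\boldsymbol{x}}=\hat f(\boldsymbol{x})+\hat g(\boldsymbol{x})\boldsymbol{u}$ with locally Lipschitz $\hat f,\hat g$ is given. $V:\mathcal{X}\to\mathbb{R}$ (a control Lyapunov function) and $h:\mathbb{R}^n\to\mathbb{R}$ (a control barrier function) are continuously differentiable, and their nominal time derivatives are $\hat{\dot V}(\boldsymbol{x},\boldsymbol{u})=L_{\hat f}V(\boldsymbol{x})+L_{\hat g}V(\boldsymbol{x})\boldsymbol{u}$ and $\hat{\dot h}(\boldsymbol{x},\boldsymbol{u})=L_{\hat f}h(\boldsymbol{x})+L_{\hat g}h(\boldsymbol{x})\boldsymbol{u}$ ($L$ denotes Lie derivative). Write $\boldsymbol{y}=[1,\boldsymbol{u}^T]^T\in\mathbb{R}^{m+1}$. Gaussian-process model: for each region $r$ and each of the two outputs (the CLF residual, superscript $V$, and the CBF residual, superscript $h$) a Gaussian process with zero prior mean and kernel $k_r((\boldsymbol{x},\boldsymbol{y}),(\boldsymbol{x}',\boldsymbol{y}'))=\boldsymbol{y}^T\Lambda_r(\boldsymbol{x},\boldsymbol{x}')\boldsymbol{y}'$,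 $\Lambda_r=\operatorname{diag}(k_r^1,\dots,k_r^{m+1})$ with positive-definite base kernels $k_r^i$ on $\mathcal{R}_r$ (chosen separately for the $V$ and $h$ outputs), is conditioned on data: $N_r$ input pairs $(\boldsymbol{x}_j,\boldsymbol{y}_j)$ with $\boldsymbol{x}_j\in\mathcal{R}_r$, collected as columns of $X_r\in\mathbb{R}^{n\times N_r}$, $Y_r\in\mathbb{R}^{(m+1)\times N_r}$, with output vector $\boldsymbol{\omega}_r\in\mathbb{R}^{N_r}$ ($\boldsymbol{\omega}_r^V$ or $\boldsymbol{\omega}_r^h$) and noise variance $\sigma_n^2>0$. With $K_r$ the Gram matrix of $k_r$ on the data and $\bar K_r=[\bar{\boldsymbol{k}}_r^1,\dots,\bar{\boldsymbol{k}}_r^{N_r}]\circ Y_r\in\mathbb{R}^{(m+1)\times N_r}$, $\bar{\boldsymbol{k}}_r^i=[k_r^1(\boldsymbol{x},\boldsymbol{x}_i),\dots,k_r^{m+1}(\boldsymbol{x},\boldsymbol{x}_i)]^T$ ($\circ$ = Hadamard product), the posterior mean and variance at $(\boldsymbol{x},\boldsymbol{y})$ are $m_r=\boldsymbol{\omega}_r^T(K_r+\sigma_n^2I)^{-1}\bar K_r^T\boldsymbol{y}$ and $\sigma_r^2=\boldsymbol{y}^T\big(\Lambda_r(\boldsymbol{x},\boldsymbol{x})-\bar K_r(K_r+\sigma_n^2I)^{-1}\bar K_r^T\big)\boldsymbol{y}$, with $\sigma_r\ge0$ the standard deviation; applying this with the $V$-data/kernels gives $m_r^V,\sigma_r^V$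 and with the $h$-data/kernels gives $m_r^h,\sigma_r^h$. A class $\mathcal{K}$ function is a continuous strictly increasing $\alpha:[0,a)\to[0,\infty)$ with $\alpha(0)=0$. *)

theory Defs
  imports "HOL-Analysis.Analysis"
begin

text \<open>Augmented input y = [1, u]; the extra coordinate is the index None.\<close>
definition aug :: "real^('m::finite) \<Rightarrow> real^('m option)" where
  "aug u = (\<chi> i. case i of None \<Rightarrow> 1 | Some j \<Rightarrow> u $ j)"

definition pd_kernel :: "'a set \<Rightarrow> ('a \<Rightarrow> 'a \<Rightarrow> real) \<Rightarrow> bool" where
  "pd_kernel S k \<longleftrightarrow> (\<forall>x\<in>S. \<forall>y\<in>S. k x y = k y x) \<and>
     (\<forall>(F::nat) (p::nat \<Rightarrow> 'a) (c::nat \<Rightarrow> real). (\<forall>i<F. p i \<in> S) \<longrightarrow>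
        0 \<le> (\<Sum>i<F. \<Sum>j<F. c i * c j * k (p i) (p j)))"

definition class_K :: "ereal \<Rightarrow> (real \<Rightarrow> real) \<Rightarrow> bool" where
  "class_K a \<alpha> \<longleftrightarrow> 0 < a \<and> continuous_on {t. 0 \<le> t \<and> ereal t < a} \<alpha> \<and>
     strict_mono_on {t. 0 \<le> t \<and> ereal t < a} \<alpha> \<and> \<alpha> 0 = 0 \<and>
     (\<forall>t. 0 \<le> t \<and> ereal t < a \<longrightarrow> 0 \<le> \<alpha> t)"

definition locally_lipschitz :: "('a::metric_space \<Rightarrow> 'b::metric_space) \<Rightarrow> bool" where
  "locally_lipschitz f \<longleftrightarrow> (\<forall>x. \<exists>e>0. \<exists>L. L-lipschitz_on (cball x e) f)"

definition C1_on :: "('a::real_normed_vector) set \<Rightarrow> ('a \<Rightarrow> real) \<Rightarrow> bool" where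
  "C1_on S f \<longleftrightarrow> (\<exists>D. (\<forall>x\<in>S. (f has_derivative blinfun_apply (D x)) (at x)) \<and> continuous_on S D)"

definition nominal_deriv ::
  "(real^'n \<Rightarrow> real) \<Rightarrow> (real^'n \<Rightarrow> real^'n) \<Rightarrow> (real^'n \<Rightarrow> real^'m^'n) \<Rightarrow> real^'n \<Rightarrow> real^'m \<Rightarrow> real"
  where "nominal_deriv W fh gh x u =
     frechet_derivative W (at x) (fh x) + frechet_derivative W (at x) (gh x *v u)"

text \<open>Gaussian process with kernel y^T Lambda(x,x') y'. Base kernels kb indexed by 'm option;
  data X j (states), Y j (augmented inputs), j :: 'N.\<close>
definition Lam :: "('m::finite option \<Rightarrow> real^'n \<Rightarrow> real^'n \<Rightarrow> real) \<Rightarrow> real^'n \<Rightarrow> real^'n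
     \<Rightarrow> real^('m option)^('m option)" where
  "Lam kb x x' = (\<chi> i j. if i = j then kb i x x' else 0)"

definition gram :: "('m::finite option \<Rightarrow> real^'n \<Rightarrow> real^'n \<Rightarrow> real) \<Rightarrow> ('N::finite \<Rightarrow> real^'n)
     \<Rightarrow> ('N \<Rightarrow> real^('m option)) \<Rightarrow> real^'N^'N" where
  "gram kb X Y = (\<chi> i j. \<Sum>l\<in>UNIV. Y i $ l * kb l (X i) (X j) * Y j $ l)"

definition kbar :: "('m::finite option \<Rightarrow> real^'n \<Rightarrow> real^'n \<Rightarrow> real) \<Rightarrow> ('N::finite \<Rightarrow> real^'n)
     \<Rightarrow> ('N \<Rightarrow> real^('m option)) \<Rightarrow> real^'n \<Rightarrow> real^'N^('m option)" where
  "kbar kb X Y x = (\<chi> l j. kb l x (X j) * Y j $ l)"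

definition gp_mean :: "('m::finite option \<Rightarrow> real^'n \<Rightarrow> real^'n \<Rightarrow> real) \<Rightarrow> ('N::finite \<Rightarrow> real^'n)
     \<Rightarrow> ('N \<Rightarrow> real^('m option)) \<Rightarrow> real^'N \<Rightarrow> real \<Rightarrow> real^'n \<Rightarrow> real^('m option) \<Rightarrow> real" where
  "gp_mean kb X Y \<omega> sn2 x y =
     \<omega> \<bullet> (matrix_inv (gram kb X Y + sn2 *\<^sub>R mat 1) *v (transpose (kbar kb X Y x) *v y))"

definition gp_var :: "('m::finite option \<Rightarrow> real^'n \<Rightarrow> real^'n \<Rightarrow> real) \<Rightarrow> ('N::finite \<Rightarrow> real^'n)
     \<Rightarrow> ('N \<Rightarrow> real^('m option)) \<Rightarrow> real \<Rightarrow> real^'n \<Rightarrow> real^('m option) \<Rightarrow> real" where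
  "gp_var kb X Y sn2 x y =
     y \<bullet> ((Lam kb x x - kbar kb X Y x ** matrix_inv (gram kb X Y + sn2 *\<^sub>R mat 1)
            ** transpose (kbar kb X Y x)) *v y)"

definition gp_sd :: "('m::finite option \<Rightarrow> real^'n \<Rightarrow> real^'n \<Rightarrow> real) \<Rightarrow> ('N::finite \<Rightarrow> real^'n)
     \<Rightarrow> ('N \<Rightarrow> real^('m option)) \<Rightarrow> real \<Rightarrow> real^'n \<Rightarrow> real^('m option) \<Rightarrow> real" where
  "gp_sd kb X Y sn2 x y = sqrt (gp_var kb X Y sn2 x y)"

text \<open>Standard SOCP data: variable z in R^nz (nat-indexed, zero beyond nz), nc cone constraints
  ||M^i z + n^i||_2 \<le> p^i . z + q^i, M^i having k i rows.\<close>
definition socp_feasible ::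
  "nat \<Rightarrow> nat \<Rightarrow> (nat \<Rightarrow> nat) \<Rightarrow> (nat \<Rightarrow> nat \<Rightarrow> nat \<Rightarrow> real) \<Rightarrow> (nat \<Rightarrow> nat \<Rightarrow> real)
     \<Rightarrow> (nat \<Rightarrow> nat \<Rightarrow> real) \<Rightarrow> (nat \<Rightarrow> real) \<Rightarrow> (nat \<Rightarrow> real) \<Rightarrow> bool" where
  "socp_feasible nz nc k M nv p q z \<longleftrightarrow>
     (\<forall>j\<ge>nz. z j = 0) \<and>
     (\<forall>i<nc. sqrt (\<Sum>l<k i. ((\<Sum>j<nz. M i l j * z j) + nv i l)\<^sup>2) \<le> (\<Sum>j<nz. p i j * z j) + q i)"

text \<open>The problem  min J(w) s.t. w \<in> F  (w = (u,d)) is equivalent to a standard SOCP: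
  there is an SOCP and a linear map z \<mapsto> (u,d) such that every feasible (u,d) is the image of
  an SOCP-feasible z whose cost equals J(u,d), and every SOCP-feasible z maps to a feasible
  (u,d) with J(u,d) \<le> cost(z). (Hence equal optimal values and corresponding optimisers.)\<close>
definition socp_equivalent :: "((real^('m::finite)) \<times> real) set \<Rightarrow> ((real^'m) \<times> real \<Rightarrow> real) \<Rightarrow> bool" where
  "socp_equivalent F J \<longleftrightarrow>
    (\<exists>(nz::nat) (nc::nat) k M nv p q (f::nat \<Rightarrow> real) (Pu::'m \<Rightarrow> nat \<Rightarrow> real) (Pd::nat \<Rightarrow> real).
      let proj = (\<lambda>z. ((\<chi> i. \<Sum>j<nz. Pu i j * z j), \<Sum>j<nz. Pd j * z j));
          cost = (\<lambda>z. \<Sum>j<nz. f j * z j)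
      in (\<forall>w\<in>F. \<exists>z. socp_feasible nz nc k M nv p q z \<and> proj z = w \<and> cost z = J w) \<and>
         (\<forall>z. socp_feasible nz nc k M nv p q z \<longrightarrow> proj z \<in> F \<and> J (proj z) \<le> cost z))"

end

(*
  The posterior variance is a positive semidefinite quadratic form in y = [1, u]: it is the
  Schur complement, regularised by the noise, of the joint kernel Gram matrix at x and at the
  data points.  Writing a positive semidefinite form as a sum of squares of linear forms turns
  beta * sigma into the Euclidean norm of a linear function of y, while the nominal derivatives and
  the posterior means are linear in y.  Both constraints are therefore second-order cone
  constraints in (u, d).  The cost enters through an epigraph variable t and the rotated cone
  norm (u, sqrt rho * d, (t - 1) / 2) <= (t + 1) / 2.  Convexity of the feasible set and of the
  cost is inherited from the cone program, whose feasible set is convex and is mapped linearly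
  onto the original variables.
*)
theory Submission
  imports Defs
begin

subsection \<open>Positive semidefinite quadratic forms\<close>

definition quad_form :: "'a set \<Rightarrow> ('a \<Rightarrow> 'a \<Rightarrow> real) \<Rightarrow> ('a \<Rightarrow> real) \<Rightarrow> real" where
  "quad_form I Q y = (\<Sum>a\<in>I. \<Sum>b\<in>I. Q a b * y a * y b)"

lemma quad_form_symmetrize: "quad_form I Q y = quad_form I (\<lambda>a b. (Q a b + Q b a) / 2) y"
proof -
  have "(\<Sum>a\<in>I. \<Sum>b\<in>I. Q b a * y a * y b) = (\<Sum>a\<in>I. \<Sum>b\<in>I. Q a b * y a * y b)"
    by (subst sum.swap) (simp add: mult_ac)
  then show ?thesis
    unfolding quad_form_def
    by (simp add: add_divide_distrib distrib_right sum.distrib sum_divide_distrib[symmetric])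
qed

lemma quad_form_insert:
  assumes "finite I" "n \<notin> I"
  shows "quad_form (insert n I) Q y
           = quad_form I Q y + y n * (\<Sum>a\<in>I. (Q a n + Q n a) * y a) + Q n n * (y n)\<^sup>2"
  using assms unfolding quad_form_def
  by (simp add: sum.distrib distrib_right sum_distrib_left sum_distrib_right mult_ac power2_eq_square)
     (simp add: distrib_left sum.distrib mult_ac)

lemma quad_form_upd_outside: "n \<notin> I \<Longrightarrow> quad_form I Q (y(n := t)) = quad_form I Q y"
  unfolding quad_form_def by (intro sum.cong refl) auto

lemma quad_form_minus_rank_one:
  "quad_form I (\<lambda>a b. Q a b - v a * v b / s) y = quad_form I Q y - (\<Sum>a\<in>I. v a * y a)\<^sup>2 / s"
proof -
  have "(\<Sum>a\<in>I. \<Sum>b\<in>I. v a * v b / s * y a * y b) = (\<Sum>a\<in>I. v a * y a)\<^sup>2 / s"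
    unfolding power2_eq_square sum_product sum_divide_distrib
    by (intro sum.cong refl) (simp add: mult_ac)
  then show ?thesis
    unfolding quad_form_def by (simp add: left_diff_distrib sum_subtractf)
qed

lemma quad_form_insert_symmetric:
  assumes "finite I" "n \<notin> I" and sym: "\<And>a b. Q a b = Q b a"
  shows "quad_form (insert n I) Q y
           = quad_form I Q y + 2 * y n * (\<Sum>a\<in>I. Q a n * y a) + Q n n * (y n)\<^sup>2"
proof -
  have "(\<Sum>a\<in>I. (Q a n + Q n a) * y a) = 2 * (\<Sum>a\<in>I. Q a n * y a)"
    unfolding sum_distrib_left by (intro sum.cong refl) (simp add: sym[of n])
  then show ?thesis
    unfolding quad_form_insert[OF assms(1,2)] by simp
qed

lemma psd_quad_form_insert_diagonal:
  assumes "finite I" "n \<notin> I" and sym: "\<And>a b. Q a b = Q b a"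
    and psd: "\<forall>y. 0 \<le> quad_form (insert n I) Q y"
  shows "0 \<le> Q n n" and "Q n n = 0 \<Longrightarrow> (\<Sum>a\<in>I. Q a n * y a) = 0"
proof -
  have along_n: "quad_form (insert n I) Q (y(n := t))
      = quad_form I Q y + 2 * t * (\<Sum>a\<in>I. Q a n * y a) + Q n n * t\<^sup>2" for y t
  proof -
    have "(\<Sum>a\<in>I. Q a n * (y(n := t)) a) = (\<Sum>a\<in>I. Q a n * y a)"
      using assms(2) by (intro sum.cong) auto
    then show ?thesis
      unfolding quad_form_insert_symmetric[OF assms(1-3)] quad_form_upd_outside[OF assms(2)] by simp
  qed
  have "quad_form I Q (\<lambda>_. 0) = 0"
    by (simp add: quad_form_def)
  then show "0 \<le> Q n n"
    using psd[rule_format, of "(\<lambda>_. 0)(n := 1)"] along_n[of "\<lambda>_. 0" 1] by simp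
  show "(\<Sum>a\<in>I. Q a n * y a) = 0" if "Q n n = 0"
  proof (rule ccontr)
    assume "(\<Sum>a\<in>I. Q a n * y a) \<noteq> 0"
    then have "quad_form (insert n I) Q (y(n := - (quad_form I Q y + 1) / (2 * (\<Sum>a\<in>I. Q a n * y a)))) = -1"
      unfolding along_n using \<open>Q n n = 0\<close> by (simp add: field_simps)
    then show False
      using psd by (metis neg_0_le_iff_le not_one_le_zero)
  qed
qed

lemma psd_quad_form_insert_split:
  assumes "finite I" "n \<notin> I" and sym: "\<And>a b. Q a b = Q b a"
    and psd: "\<forall>y. 0 \<le> quad_form (insert n I) Q y"
  shows "\<exists>Q' c. (\<forall>y. 0 \<le> quad_form I Q' y) \<and>
           (\<forall>y. quad_form (insert n I) Q y = quad_form I Q' y + (\<Sum>a\<in>insert n I. c a * y a)\<^sup>2)"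
proof -
  define s where "s = Q n n"
  define \<beta> where "\<beta> y = (\<Sum>a\<in>I. Q a n * y a)" for y
  note diagonal = psd_quad_form_insert_diagonal[OF assms, folded s_def \<beta>_def]
  \<comment> \<open>Completing the square in the variable y n; for s = 0 the junk value x / 0 = 0 makes
    the same formulas work, because then \<beta> vanishes.\<close>
  define Q' where "Q' a b = Q a b - Q a n * Q b n / s" for a b
  define c where "c a = (if a = n then sqrt s else Q a n / sqrt s)" for a
  have Q'_eq: "quad_form I Q' y = quad_form I Q y - (\<beta> y)\<^sup>2 / s" for y
    unfolding Q'_def \<beta>_def by (rule quad_form_minus_rank_one)
  have c_sum: "(\<Sum>a\<in>insert n I. c a * y a) = sqrt s * y n + \<beta> y / sqrt s" for y
    using assms(1,2) unfolding c_def \<beta>_def by (auto simp: sum_divide_distrib intro!: sum.cong)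
  have square: "(sqrt s * y n + \<beta> y / sqrt s)\<^sup>2 = s * (y n)\<^sup>2 + 2 * y n * \<beta> y + (\<beta> y)\<^sup>2 / s" for y
  proof (cases "s = 0")
    case True
    then show ?thesis using diagonal(2) by simp
  next
    case False
    then have "0 < s" using diagonal(1) by simp
    then show ?thesis by (simp add: power2_sum power_mult_distrib power_divide)
  qed
  have main: "quad_form (insert n I) Q y = quad_form I Q' y + (\<Sum>a\<in>insert n I. c a * y a)\<^sup>2" for y
  proof -
    have "quad_form (insert n I) Q y = quad_form I Q y + 2 * y n * \<beta> y + s * (y n)\<^sup>2"
      unfolding quad_form_insert_symmetric[OF assms(1-3)] s_def \<beta>_def ..
    then show ?thesis
      unfolding Q'_eq c_sum square by simp
  qed
  have "0 \<le> quad_form I Q' y" for y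
  proof -
    define y' where "y' = y(n := - \<beta> y / s)"
    have \<beta>_y': "\<beta> y' = \<beta> y"
      unfolding \<beta>_def y'_def using assms(2) by (intro sum.cong) auto
    have "(\<Sum>a\<in>insert n I. c a * y' a) = 0"
      unfolding c_sum \<beta>_y' using diagonal
      by (cases "s = 0") (simp_all add: y'_def field_simps real_sqrt_divide)
    then have "quad_form (insert n I) Q y' = quad_form I Q' y'"
      using main[of y'] by simp
    also have "\<dots> = quad_form I Q' y"
      unfolding y'_def by (rule quad_form_upd_outside[OF assms(2)])
    finally show ?thesis using psd by metis
  qed
  then show ?thesis using main by blast
qed

lemma psd_quad_form_sum_of_squares:
  assumes "finite I" and "\<forall>y. 0 \<le> quad_form I Q y"
  shows "\<exists>L. \<forall>y. quad_form I Q y = (\<Sum>l\<in>I. (\<Sum>a\<in>I. L l a * y a)\<^sup>2)"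
  using assms
proof (induction I arbitrary: Q rule: finite_induct)
  case empty
  then show ?case by (simp add: quad_form_def)
next
  case (insert n I)
  define S where "S a b = (Q a b + Q b a) / 2" for a b
  have S_eq: "quad_form J Q y = quad_form J S y" for J y
    unfolding S_def by (rule quad_form_symmetrize)
  have S_sym: "S a b = S b a" for a b
    unfolding S_def by simp
  have S_psd: "\<forall>y. 0 \<le> quad_form (insert n I) S y"
    using insert.prems unfolding S_eq .
  obtain Q' c where psd': "\<forall>y. 0 \<le> quad_form I Q' y"
    and split: "\<forall>y. quad_form (insert n I) S y = quad_form I Q' y + (\<Sum>a\<in>insert n I. c a * y a)\<^sup>2"
    using psd_quad_form_insert_split[OF insert.hyps S_sym S_psd] by blast
  obtain L' where L': "\<forall>y. quad_form I Q' y = (\<Sum>l\<in>I. (\<Sum>a\<in>I. L' l a * y a)\<^sup>2)"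
    using insert.IH[OF psd'] by blast
  define L where "L l a = (if l = n then c a else if a = n then 0 else L' l a)" for l a
  have "(\<Sum>a\<in>insert n I. L l a * y a) = (\<Sum>a\<in>I. L' l a * y a)" if "l \<in> I" for l y
    using that insert.hyps by (auto simp: L_def intro!: sum.cong)
  then have "quad_form (insert n I) Q y = (\<Sum>l\<in>insert n I. (\<Sum>a\<in>insert n I. L l a * y a)\<^sup>2)" for y
    using split L' insert.hyps unfolding S_eq by (simp add: L_def)
  then show ?case by blast
qed

lemma psd_matrix_sum_of_squares:
  fixes A :: "real^'k^'k"
  assumes "\<forall>y. 0 \<le> y \<bullet> (A *v y)"
  shows "\<exists>(g :: nat \<Rightarrow> real^'k) K. \<forall>y. y \<bullet> (A *v y) = (\<Sum>l<K. (g l \<bullet> y)\<^sup>2)"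
proof -
  have form: "y \<bullet> (A *v y) = quad_form UNIV (\<lambda>i j. A $ i $ j) (($) y)" for y
  proof -
    have "y \<bullet> (A *v y) = (\<Sum>i\<in>UNIV. \<Sum>j\<in>UNIV. A $ i $ j * y $ i * y $ j)"
      unfolding inner_vec_def matrix_vector_mult_def by (simp add: sum_distrib_left mult_ac)
    then show ?thesis unfolding quad_form_def .
  qed
  have psd: "\<forall>z. 0 \<le> quad_form UNIV (\<lambda>i j. A $ i $ j) z"
    using assms form by (metis vec_lambda_inverse UNIV_I)
  obtain L :: "'k \<Rightarrow> 'k \<Rightarrow> real"
    where L: "\<forall>z. quad_form UNIV (\<lambda>i j. A $ i $ j) z = (\<Sum>l\<in>UNIV. (\<Sum>a\<in>UNIV. L l a * z a)\<^sup>2)"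
    using psd_quad_form_sum_of_squares[OF finite psd] by blast
  obtain E where E: "bij_betw E {..<CARD('k)} (UNIV :: 'k set)"
    using ex_bij_betw_nat_finite[of "UNIV :: 'k set"] by (auto simp: atLeast0LessThan)
  have reindex: "(\<Sum>l\<in>UNIV. f l) = (\<Sum>l<CARD('k). f (E l))" for f :: "'k \<Rightarrow> real"
    by (rule sum.reindex_bij_betw[OF E, symmetric])
  have "y \<bullet> (A *v y) = (\<Sum>l<CARD('k). ((\<chi> a. L (E l) a) \<bullet> y)\<^sup>2)" for y
    unfolding form L[rule_format] reindex[of "\<lambda>l. (\<Sum>a\<in>UNIV. L l a * y $ a)\<^sup>2"]
    by (simp add: inner_vec_def)
  then show ?thesis by (intro exI[of _ "\<lambda>l. \<chi> a. L (E l) a"] exI allI)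
qed

lemma matrix_inv_right:
  fixes M :: "'a::semiring_1^'n^'n"
  assumes "invertible M"
  shows "M ** matrix_inv M = mat 1"
  using assms unfolding invertible_def matrix_inv_def
  by (rule someI_ex[where P = "\<lambda>B. M ** B = mat 1 \<and> B ** M = mat 1", THEN conjunct1])

lemma invertible_if_positive_definite:
  fixes M :: "real^'n^'n"
  assumes "\<And>w. w \<noteq> 0 \<Longrightarrow> 0 < w \<bullet> (M *v w)"
  shows "invertible M"
proof -
  have "inj ((*v) M)"
  proof (rule injI)
    fix a b assume "M *v a = M *v b"
    then have "(a - b) \<bullet> (M *v (a - b)) = 0" by (simp add: matrix_vector_mult_diff_distrib)
    then show "a = b" using assms[of "a - b"] by fastforce
  qed
  then show ?thesis
    using matrix_left_invertible_injective invertible_left_inverse by blast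
qed

lemma psd_regularized_schur_complement:
  fixes A :: "real^'a^'a" and B :: "real^'b^'a" and C :: "real^'b^'b"
  assumes block: "\<And>a b. 0 \<le> a \<bullet> (A *v a) - 2 * (a \<bullet> (B *v b)) + b \<bullet> (C *v b)"
    and "\<sigma> > 0"
  shows "0 \<le> a \<bullet> ((A - B ** matrix_inv (C + \<sigma> *\<^sub>R mat 1) ** transpose B) *v a)"
proof -
  define M where "M = C + \<sigma> *\<^sub>R mat 1"
  have M_form: "b \<bullet> (M *v b) = b \<bullet> (C *v b) + \<sigma> * (b \<bullet> b)" for b
    unfolding M_def
    by (simp add: matrix_vector_mult_add_rdistrib scaleR_matrix_vector_assoc[symmetric] inner_add_right)
  have "0 \<le> b \<bullet> (C *v b)" for b
    using block[of 0 b] by simp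
  then have "invertible M"
    using \<open>\<sigma> > 0\<close> by (intro invertible_if_positive_definite) (simp add: M_form add_nonneg_pos)
  \<comment> \<open>The minimiser of the block form in its second argument, for the regularised block.\<close>
  define b where "b = matrix_inv M *v (transpose B *v a)"
  have Mb: "M *v b = transpose B *v a"
    unfolding b_def matrix_vector_mul_assoc[of M] matrix_inv_right[OF \<open>invertible M\<close>]
    by (rule matrix_vector_mul_lid)
  have Bb: "a \<bullet> (B *v b) = b \<bullet> (M *v b)"
    unfolding Mb by (metis dot_lmul_matrix inner_commute transpose_matrix_vector)
  have "a \<bullet> ((A - B ** matrix_inv M ** transpose B) *v a) = a \<bullet> (A *v a) - a \<bullet> (B *v b)"
    unfolding b_def
    by (simp only: matrix_vector_mul_assoc matrix_mul_assoc matrix_vector_mult_diff_rdistrib inner_diff_right)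
  also have "\<dots> = (a \<bullet> (A *v a) - 2 * (a \<bullet> (B *v b)) + b \<bullet> (C *v b)) + \<sigma> * (b \<bullet> b)"
    using Bb M_form[of b] by simp
  finally show ?thesis
    using block[of a b] \<open>\<sigma> > 0\<close> unfolding M_def by simp
qed

subsection \<open>The Gaussian-process posterior\<close>

lemma sum_UNIV_option: "(\<Sum>i\<in>UNIV. f i) = f None + (\<Sum>j\<in>UNIV. f (Some j))"
  for f :: "'a::finite option \<Rightarrow> 'b::comm_monoid_add"
  by (simp add: UNIV_option_conv sum.reindex)

lemma pd_kernel_quad_nonneg:
  fixes k :: "'b \<Rightarrow> 'b \<Rightarrow> real" and p :: "'a::finite \<Rightarrow> 'b"
  assumes "pd_kernel S k" and "\<forall>i. p i \<in> S"
  shows "0 \<le> (\<Sum>i\<in>UNIV. \<Sum>j\<in>UNIV. c i * c j * k (p i) (p j))"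
proof -
  obtain E where E: "bij_betw E {..<CARD('a)} (UNIV :: 'a set)"
    using ex_bij_betw_nat_finite[of "UNIV :: 'a set"] by (auto simp: atLeast0LessThan)
  have reindex: "(\<Sum>i\<in>UNIV. g i) = (\<Sum>i<CARD('a). g (E i))" for g :: "'a \<Rightarrow> real"
    by (rule sum.reindex_bij_betw[OF E, symmetric])
  have "0 \<le> (\<Sum>i<CARD('a). \<Sum>j<CARD('a). c (E i) * c (E j) * k (p (E i)) (p (E j)))"
    using assms unfolding pd_kernel_def by auto
  then show ?thesis
    unfolding reindex .
qed

lemma gp_block_form_nonneg:
  fixes kb :: "'m::finite option \<Rightarrow> real^'n \<Rightarrow> real^'n \<Rightarrow> real"
    and X :: "'N::finite \<Rightarrow> real^'n" and Y :: "'N \<Rightarrow> real^('m option)"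
  assumes pd: "\<forall>l. pd_kernel S (kb l)" and "x \<in> S" and "\<forall>j. X j \<in> S"
  shows "0 \<le> a \<bullet> (Lam kb x x *v a) - 2 * (a \<bullet> (kbar kb X Y x *v b)) + b \<bullet> (gram kb X Y *v b)"
proof -
  \<comment> \<open>The block form is the sum over l of the quadratic forms P l of kb l at the points x, X j,
    with weights a $ l and - b $ j * Y j $ l.\<close>
  define pt where "pt i = (case i of None \<Rightarrow> x | Some j \<Rightarrow> X j)" for i
  define c where "c l i = (case i of None \<Rightarrow> a $ l | Some j \<Rightarrow> - (b $ j * Y j $ l))" for l i
  define P where "P l = (\<Sum>i\<in>UNIV. \<Sum>j\<in>UNIV. c l i * c l j * kb l (pt i) (pt j))" for l
  have "0 \<le> P l" for l
    unfolding P_def using assms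
    by (intro pd_kernel_quad_nonneg[OF pd[rule_format]]) (simp add: pt_def split: option.split)
  have sym: "kb l (X j) x = kb l x (X j)" for l j
    using pd assms unfolding pd_kernel_def by blast
  have P_eq: "P l = kb l x x * (a $ l)\<^sup>2 - 2 * (\<Sum>j\<in>UNIV. a $ l * (b $ j * Y j $ l) * kb l x (X j))
      + (\<Sum>i\<in>UNIV. \<Sum>j\<in>UNIV. (b $ i * Y i $ l) * (b $ j * Y j $ l) * kb l (X i) (X j))" for l
    unfolding P_def sum_UNIV_option c_def pt_def
    by (simp add: sym sum.distrib sum_negf power2_eq_square sum_subtractf algebra_simps)
  have Lam: "a \<bullet> (Lam kb x x *v a) = (\<Sum>l\<in>UNIV. kb l x x * (a $ l)\<^sup>2)"
    unfolding Lam_def inner_vec_def matrix_vector_mult_def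
    by (simp add: power2_eq_square mult_ac if_distrib[of "(*) _"] cong: if_cong)
  have kbar: "a \<bullet> (kbar kb X Y x *v b) = (\<Sum>l\<in>UNIV. \<Sum>j\<in>UNIV. a $ l * (b $ j * Y j $ l) * kb l x (X j))"
    unfolding kbar_def inner_vec_def matrix_vector_mult_def
    by (simp add: sum_distrib_left mult_ac)
  have "b \<bullet> (gram kb X Y *v b)
      = (\<Sum>i\<in>UNIV. \<Sum>j\<in>UNIV. \<Sum>l\<in>UNIV. (b $ i * Y i $ l) * (b $ j * Y j $ l) * kb l (X i) (X j))"
    unfolding inner_vec_def matrix_vector_mult_def gram_def
    by (simp add: sum_distrib_left sum_distrib_right mult_ac)
  also have "\<dots> = (\<Sum>l\<in>UNIV. \<Sum>i\<in>UNIV. \<Sum>j\<in>UNIV. (b $ i * Y i $ l) * (b $ j * Y j $ l) * kb l (X i) (X j))"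
    by (simp only: sum.swap[where B = UNIV and A = "UNIV :: 'm option set"])
  finally have gram: "b \<bullet> (gram kb X Y *v b) = \<dots>" .
  have "a \<bullet> (Lam kb x x *v a) - 2 * (a \<bullet> (kbar kb X Y x *v b)) + b \<bullet> (gram kb X Y *v b) = (\<Sum>l\<in>UNIV. P l)"
    unfolding P_eq Lam kbar gram by (simp add: sum.distrib sum_subtractf sum_distrib_left)
  then show ?thesis
    using \<open>\<And>l. 0 \<le> P l\<close> by (simp add: sum_nonneg)
qed

lemma gp_var_nonneg:
  fixes kb :: "'m::finite option \<Rightarrow> real^'n \<Rightarrow> real^'n \<Rightarrow> real"
    and X :: "'N::finite \<Rightarrow> real^'n" and Y :: "'N \<Rightarrow> real^('m option)"
  assumes "\<forall>l. pd_kernel S (kb l)" and "x \<in> S" and "\<forall>j. X j \<in> S" and "sn2 > 0"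
  shows "0 \<le> gp_var kb X Y sn2 x y"
  unfolding gp_var_def
  using psd_regularized_schur_complement[OF gp_block_form_nonneg[OF assms(1-3)] \<open>sn2 > 0\<close>] .

lemma scaled_gp_sd_eq_sqrt_sum_squares:
  fixes kb :: "'m::finite option \<Rightarrow> real^'n \<Rightarrow> real^'n \<Rightarrow> real"
    and X :: "'N::finite \<Rightarrow> real^'n" and Y :: "'N \<Rightarrow> real^('m option)"
  assumes "\<forall>l. pd_kernel S (kb l)" and "x \<in> S" and "\<forall>j. X j \<in> S" and "sn2 > 0"
    and "\<beta> \<ge> 0"
  shows "\<exists>(g :: nat \<Rightarrow> real^('m option)) K.
           \<forall>y. \<beta> * gp_sd kb X Y sn2 x y = sqrt (\<Sum>l<K. (g l \<bullet> y)\<^sup>2)"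
proof -
  define A where "A = Lam kb x x - kbar kb X Y x ** matrix_inv (gram kb X Y + sn2 *\<^sub>R mat 1)
                        ** transpose (kbar kb X Y x)"
  have var: "gp_var kb X Y sn2 x y = y \<bullet> (A *v y)" for y
    unfolding gp_var_def A_def ..
  have "\<forall>y. 0 \<le> y \<bullet> (A *v y)"
    using gp_var_nonneg[OF assms(1-4), where Y = Y] by (simp add: var)
  then obtain g :: "nat \<Rightarrow> real^('m option)" and K
    where g: "\<forall>y. y \<bullet> (A *v y) = (\<Sum>l<K. (g l \<bullet> y)\<^sup>2)"
    using psd_matrix_sum_of_squares by blast
  have "\<beta> * gp_sd kb X Y sn2 x y = sqrt (\<Sum>l<K. ((\<beta> *\<^sub>R g l) \<bullet> y)\<^sup>2)" for y
  proof -
    have "\<beta> * gp_sd kb X Y sn2 x y = sqrt (\<beta>\<^sup>2) * sqrt (\<Sum>l<K. (g l \<bullet> y)\<^sup>2)"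
      unfolding gp_sd_def var g[rule_format] using \<open>\<beta> \<ge> 0\<close> by simp
    then show ?thesis
      by (simp add: real_sqrt_mult sum_distrib_left[symmetric] power_mult_distrib)
  qed
  then show ?thesis by (intro exI[of _ "\<lambda>l. \<beta> *\<^sub>R g l"] exI allI)
qed

lemma aug_components: "aug u $ None = 1" "(\<chi> j. aug u $ Some j) = u"
  by (simp_all add: aug_def vec_eq_iff)

lemma nominal_deriv_add_gp_mean_linear_in_aug:
  fixes W :: "real^'n \<Rightarrow> real" and gh :: "real^'n \<Rightarrow> real^'m^'n"
    and kb :: "'m::finite option \<Rightarrow> real^'n \<Rightarrow> real^'n \<Rightarrow> real"
    and X :: "'N::finite \<Rightarrow> real^'n" and Y :: "'N \<Rightarrow> real^('m option)"
  assumes "linear (frechet_derivative W (at x))"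
  shows "\<exists>c. \<forall>u. nominal_deriv W fh gh x u + gp_mean kb X Y \<omega> sn2 x (aug u) + \<kappa> = c \<bullet> aug u"
proof -
  define D where "D = frechet_derivative W (at x)"
  define \<Phi> where "\<Phi> y = D (fh x) * y $ None + D (gh x *v (\<chi> j. y $ Some j))
                         + gp_mean kb X Y \<omega> sn2 x y + \<kappa> * y $ None" for y
  have Some_add: "(\<chi> j. y $ Some j + z $ Some j) = (\<chi> j. y $ Some j) + (\<chi> j. z $ Some j)"
    and Some_scale: "(\<chi> j. r * y $ Some j) = r *\<^sub>R (\<chi> j. y $ Some j)" for y z :: "real^('m option)" and r
    by (simp_all add: vec_eq_iff)
  have "linear \<Phi>"
    using assms unfolding linear_iff \<Phi>_def gp_mean_def D_def[symmetric]
    by (simp add: algebra_simps linear_add linear_scale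
                  Some_add Some_scale del: transpose_matrix_vector)
  have "\<Phi> (aug u) = nominal_deriv W fh gh x u + gp_mean kb X Y \<omega> sn2 x (aug u) + \<kappa>" for u
    unfolding \<Phi>_def nominal_deriv_def D_def aug_components by simp
  moreover have "\<Phi> y = adjoint \<Phi> 1 \<bullet> y" for y
    using adjoint_works[OF \<open>linear \<Phi>\<close>, of y 1] by (simp add: inner_commute)
  ultimately show ?thesis by metis
qed

lemma C1_on_linear_frechet_derivative:
  assumes "C1_on S f" and "x \<in> S"
  shows "linear (frechet_derivative f (at x))"
proof -
  obtain D where "\<forall>x\<in>S. (f has_derivative blinfun_apply (D x)) (at x)"
    using assms(1) unfolding C1_on_def by blast
  then have "(f has_derivative blinfun_apply (D x)) (at x)"
    using assms(2) by blast
  then show ?thesis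
    by (metis frechet_derivative_at has_derivative_linear)
qed

subsection \<open>Second-order cone programs\<close>

lemma sqrt_sum_squares_convex_comb:
  fixes a b :: "nat \<Rightarrow> real"
  assumes "0 \<le> \<mu>" "0 \<le> \<nu>"
  shows "sqrt (\<Sum>l<K. (\<mu> * a l + \<nu> * b l)\<^sup>2)
           \<le> \<mu> * sqrt (\<Sum>l<K. (a l)\<^sup>2) + \<nu> * sqrt (\<Sum>l<K. (b l)\<^sup>2)"
proof -
  have "L2_set (\<lambda>l. \<mu> * a l + \<nu> * b l) {..<K}
      \<le> L2_set (\<lambda>l. \<mu> * a l) {..<K} + L2_set (\<lambda>l. \<nu> * b l) {..<K}"
    by (rule L2_set_triangle_ineq)
  also have "\<dots> = \<mu> * L2_set a {..<K} + \<nu> * L2_set b {..<K}"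
    using assms by (simp add: L2_set_right_distrib)
  finally show ?thesis unfolding L2_set_def .
qed

lemma socp_feasible_convex_comb:
  assumes "socp_feasible nz nc k M nv p q z1" and "socp_feasible nz nc k M nv p q z2"
    and "0 \<le> \<mu>" "0 \<le> \<nu>" "\<mu> + \<nu> = 1"
  shows "socp_feasible nz nc k M nv p q (\<lambda>j. \<mu> * z1 j + \<nu> * z2 j)"
  unfolding socp_feasible_def
proof (intro conjI allI impI)
  show "\<mu> * z1 j + \<nu> * z2 j = 0" if "nz \<le> j" for j
    using assms(1,2) that unfolding socp_feasible_def by simp
next
  fix i assume "i < nc"
  have affine: "(\<Sum>j<nz. A j * (\<mu> * z1 j + \<nu> * z2 j)) + c
      = \<mu> * ((\<Sum>j<nz. A j * z1 j) + c) + \<nu> * ((\<Sum>j<nz. A j * z2 j) + c)" for A :: "nat \<Rightarrow> real" and c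
    using \<open>\<mu> + \<nu> = 1\<close>
    by (simp add: algebra_simps sum.distrib sum_distrib_left flip: distrib_right)
  let ?row = "\<lambda>z l. (\<Sum>j<nz. M i l j * z j) + nv i l"
  let ?rhs = "\<lambda>z. (\<Sum>j<nz. p i j * z j) + q i"
  have "sqrt (\<Sum>l<k i. (\<mu> * ?row z1 l + \<nu> * ?row z2 l)\<^sup>2)
      \<le> \<mu> * sqrt (\<Sum>l<k i. (?row z1 l)\<^sup>2) + \<nu> * sqrt (\<Sum>l<k i. (?row z2 l)\<^sup>2)"
    using assms(3,4) by (rule sqrt_sum_squares_convex_comb)
  also have "\<dots> \<le> \<mu> * ?rhs z1 + \<nu> * ?rhs z2"
    using assms \<open>i < nc\<close> unfolding socp_feasible_def by (intro add_mono mult_left_mono) auto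
  finally show "sqrt (\<Sum>l<k i. (?row (\<lambda>j. \<mu> * z1 j + \<nu> * z2 j) l)\<^sup>2)
      \<le> ?rhs (\<lambda>j. \<mu> * z1 j + \<nu> * z2 j)"
    unfolding affine .
qed

lemma socp_equivalent_convex:
  fixes F :: "((real^'m::finite) \<times> real) set"
  assumes "socp_equivalent F J"
  shows "convex F" and "convex_on F J"
proof -
  obtain nz nc k M nv p q f and Pu :: "'m \<Rightarrow> nat \<Rightarrow> real" and Pd
    where repr: "let proj = (\<lambda>z. ((\<chi> i. \<Sum>j<nz. Pu i j * z j), \<Sum>j<nz. Pd j * z j));
               cost = (\<lambda>z. \<Sum>j<nz. f j * z j)
           in (\<forall>w\<in>F. \<exists>z. socp_feasible nz nc k M nv p q z \<and> proj z = w \<and> cost z = J w) \<and>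
              (\<forall>z. socp_feasible nz nc k M nv p q z \<longrightarrow> proj z \<in> F \<and> J (proj z) \<le> cost z)"
    using assms unfolding socp_equivalent_def by blast
  define proj where "proj z = ((\<chi> i. \<Sum>j<nz. Pu i j * z j), \<Sum>j<nz. Pd j * z j)" for z
  define cost where "cost z = (\<Sum>j<nz. f j * z j)" for z
  have lift: "\<forall>w\<in>F. \<exists>z. socp_feasible nz nc k M nv p q z \<and> proj z = w \<and> cost z = J w"
    and drop: "\<And>z. socp_feasible nz nc k M nv p q z \<Longrightarrow> proj z \<in> F \<and> J (proj z) \<le> cost z"
    using repr unfolding Let_def proj_def cost_def by auto
  have proj_comb: "proj (\<lambda>j. \<mu> * z1 j + \<nu> * z2 j) = \<mu> *\<^sub>R proj z1 + \<nu> *\<^sub>R proj z2"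
    and cost_comb: "cost (\<lambda>j. \<mu> * z1 j + \<nu> * z2 j) = \<mu> * cost z1 + \<nu> * cost z2" for z1 z2 \<mu> \<nu>
    unfolding proj_def cost_def by (simp_all add: algebra_simps sum.distrib sum_distrib_left vec_eq_iff)
  have comb: "\<mu> *\<^sub>R w1 + \<nu> *\<^sub>R w2 \<in> F \<and> J (\<mu> *\<^sub>R w1 + \<nu> *\<^sub>R w2) \<le> \<mu> * J w1 + \<nu> * J w2"
    if w: "w1 \<in> F" "w2 \<in> F" and coeffs: "0 \<le> \<mu>" "0 \<le> \<nu>" "\<mu> + \<nu> = 1" for w1 w2 \<mu> \<nu>
  proof -
    obtain z1 z2 where z1: "socp_feasible nz nc k M nv p q z1" "proj z1 = w1" "cost z1 = J w1"
      and z2: "socp_feasible nz nc k M nv p q z2" "proj z2 = w2" "cost z2 = J w2"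
      using lift w by metis
    show ?thesis
      using drop[OF socp_feasible_convex_comb[OF z1(1) z2(1) coeffs]]
      unfolding proj_comb cost_comb z1 z2 by simp
  qed
  show "convex F"
    by (rule convexI) (use comb in blast)
  then show "convex_on F J"
    by (intro convex_onI) (use comb in auto)
qed

lemma sum_indicator_mult:
  fixes z :: "nat \<Rightarrow> real"
  assumes "t < N"
  shows "(\<Sum>j<N. (if j = t then c else 0) * z j) = c * z t"
proof -
  have "(\<Sum>j<N. (if j = t then c else 0) * z j) = (\<Sum>j<N. if j = t then c * z j else 0)"
    by (rule sum.cong) auto
  also have "\<dots> = c * z t"
    using assms by (simp add: sum.delta)
  finally show ?thesis .
qed

lemma socp_equivalent_if_epigraph_socp:
  fixes F :: "((real^'m::finite) \<times> real) set"
  assumes e: "bij_betw e {..<nm} (UNIV :: 'm set)"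
    and feas: "\<And>u z. \<forall>a<nm. u $ e a = z a \<Longrightarrow> \<forall>j\<ge>Suc (Suc nm). z j = 0 \<Longrightarrow>
      socp_feasible (Suc (Suc nm)) nc k M nv p q z \<longleftrightarrow> (u, z nm) \<in> F \<and> J (u, z nm) \<le> z (Suc nm)"
  shows "socp_equivalent F J"
proof -
  \<comment> \<open>The SOCP variable is z = (u $ e 0, ..., u $ e (nm - 1), d, t) with the epigraph variable t.\<close>
  define nz where "nz = Suc (Suc nm)"
  define ei where "ei = inv_into {..<nm} e"
  have ei_e: "ei (e a) = a" if "a < nm" for a
    using e that unfolding ei_def by (simp add: bij_betw_inv_into_left)
  have e_ei: "e (ei i) = i" and ei_less: "ei i < nm" for i
    using e unfolding ei_def
    by (simp_all add: bij_betw_inv_into_right) (metis bij_betw_def inv_into_into lessThan_iff UNIV_I)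
  have nz_bounds: "ei i < nz" "nm < nz" "Suc nm < nz" for i
    using ei_less[of i] unfolding nz_def by simp_all
  define Pu :: "'m \<Rightarrow> nat \<Rightarrow> real" where "Pu i j = (if j = ei i then 1 else 0)" for i j
  define Pd :: "nat \<Rightarrow> real" where "Pd j = (if j = nm then 1 else 0)" for j
  define f :: "nat \<Rightarrow> real" where "f j = (if j = Suc nm then 1 else 0)" for j
  have proj: "((\<chi> i. \<Sum>j<nz. Pu i j * z j), \<Sum>j<nz. Pd j * z j) = ((\<chi> i. z (ei i)), z nm)"
    and cost: "(\<Sum>j<nz. f j * z j) = z (Suc nm)" for z
    unfolding Pu_def Pd_def f_def using nz_bounds by (simp_all add: sum_indicator_mult)
  show ?thesis
    unfolding socp_equivalent_def Let_def
  proof (rule exI[of _ nz], rule exI[of _ nc], rule exI[of _ k], rule exI[of _ M], rule exI[of _ nv],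
      rule exI[of _ p], rule exI[of _ q], rule exI[of _ f], rule exI[of _ Pu], rule exI[of _ Pd],
      intro conjI ballI allI impI, unfold proj cost)
    fix w assume "w \<in> F"
    obtain u d where w: "w = (u, d)" by fastforce
    define z where "z j = (if j < nm then u $ e j else if j = nm then d
                           else if j = Suc nm then J (u, d) else 0)" for j
    have "socp_feasible nz nc k M nv p q z"
      using feas[of u z] \<open>w \<in> F\<close> unfolding w z_def nz_def by simp
    moreover have "((\<chi> i. z (ei i)), z nm) = w"
      unfolding w z_def by (simp add: vec_eq_iff ei_less e_ei)
    ultimately show "\<exists>z. socp_feasible nz nc k M nv p q z \<and> ((\<chi> i. z (ei i)), z nm) = w \<and> z (Suc nm) = J w"
      unfolding w z_def by auto
  next
    fix z assume "socp_feasible nz nc k M nv p q z"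
    moreover have "\<forall>a<nm. (\<chi> i. z (ei i)) $ e a = z a"
      by (simp add: ei_e)
    ultimately show "((\<chi> i. z (ei i)), z nm) \<in> F" and "J ((\<chi> i. z (ei i)), z nm) \<le> z (Suc nm)"
      using feas unfolding socp_feasible_def nz_def by blast+
  qed
qed

lemma rotated_cone_iff:
  fixes X t :: real
  assumes "0 \<le> X"
  shows "sqrt (X + ((t - 1) / 2)\<^sup>2) \<le> (t + 1) / 2 \<longleftrightarrow> X \<le> t"
proof -
  have sq: "((t + 1) / 2)\<^sup>2 = ((t - 1) / 2)\<^sup>2 + t"
    by (simp add: power2_eq_square field_simps)
  show ?thesis
  proof
    assume "sqrt (X + ((t - 1) / 2)\<^sup>2) \<le> (t + 1) / 2"
    then show "X \<le> t" using sqrt_le_D sq by fastforce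
  next
    assume "X \<le> t"
    then show "sqrt (X + ((t - 1) / 2)\<^sup>2) \<le> (t + 1) / 2"
      using assms sq by (intro real_le_lsqrt) auto
  qed
qed

lemma sum_UNIV_reindex_coords:
  fixes u :: "real^'m::finite"
  assumes "bij_betw e {..<nm} (UNIV :: 'm set)" and "\<forall>a<nm. u $ e a = z a"
  shows "(\<Sum>i\<in>UNIV. g i * u $ i) = (\<Sum>a<nm. g (e a) * z a)"
  using sum.reindex_bij_betw[OF assms(1), of "\<lambda>i. g i * u $ i"] assms(2) by simp

lemma inner_aug_coords:
  fixes u :: "real^'m::finite" and c :: "real^('m option)"
  assumes "bij_betw e {..<nm} (UNIV :: 'm set)" and "\<forall>a<nm. u $ e a = z a"
  shows "c \<bullet> aug u = c $ None + (\<Sum>a<nm. c $ Some (e a) * z a)"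
  using sum_UNIV_reindex_coords[OF assms, of "\<lambda>j. c $ Some j"]
  by (simp add: inner_vec_def sum_UNIV_option aug_def)

lemma norm_power2_coords:
  fixes u :: "real^'m::finite"
  assumes "bij_betw e {..<nm} (UNIV :: 'm set)" and "\<forall>a<nm. u $ e a = z a"
  shows "(norm u)\<^sup>2 = (\<Sum>a<nm. (z a)\<^sup>2)"
  unfolding power2_norm_eq_inner inner_vec_def
  using sum_UNIV_reindex_coords[OF assms, of "\<lambda>i. u $ i"] assms(2) by (simp add: power2_eq_square)

lemma socp_equivalent_add_quadratic_cost:
  fixes F :: "((real^'m::finite) \<times> real) set"
  assumes e: "bij_betw e {..<nm} (UNIV :: 'm set)" and "rho > 0"
    and F: "\<And>u z. \<forall>a<nm. u $ e a = z a \<Longrightarrow> \<forall>j\<ge>Suc (Suc nm). z j = 0 \<Longrightarrow>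
      socp_feasible (Suc (Suc nm)) nc k M nv p q z \<longleftrightarrow> (u, z nm) \<in> F"
  shows "socp_equivalent F (\<lambda>(u, d). (norm u)\<^sup>2 + rho * d\<^sup>2)"
    (is "socp_equivalent F ?J")
proof -
  define nz where "nz = Suc (Suc nm)"
  \<comment> \<open>Cone nc is the rotated cone norm (u, sqrt rho * d, (t - 1) / 2) \<le> (t + 1) / 2 in the
    variables (u, d, t), with t the epigraph variable of the cost.\<close>
  define w :: "nat \<Rightarrow> real" where "w l = (if l < nm then 1 else if l = nm then sqrt rho else 1 / 2)" for l
  define k' where "k' i = (if i = nc then nz else k i)" for i
  define M' where "M' i l j = (if i = nc then if j = l then w l else 0 else M i l j)" for i l j
  define nv' where "nv' i l = (if i = nc then if l = Suc nm then - 1 / 2 else 0 else nv i l)" for i l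
  define p' where "p' i j = (if i = nc then if j = Suc nm then 1 / 2 else 0 else p i j)" for i j
  define q' where "q' i = (if i = nc then 1 / 2 else q i)" for i
  have "socp_feasible nz (Suc nc) k' M' nv' p' q' z \<longleftrightarrow> (u, z nm) \<in> F \<and> ?J (u, z nm) \<le> z (Suc nm)"
    if coords: "\<forall>a<nm. u $ e a = z a" and zeros: "\<forall>j\<ge>nz. z j = 0" for u z
  proof -
    have nz_bounds: "nm < nz" "Suc nm < nz"
      unfolding nz_def by simp_all
    have "(\<Sum>l<k' nc. ((\<Sum>j<nz. M' nc l j * z j) + nv' nc l)\<^sup>2) = (\<Sum>l<nz. (w l * z l + nv' nc l)\<^sup>2)"
      unfolding k'_def M'_def by (simp add: sum_indicator_mult)
    also have "\<dots> = ?J (u, z nm) + ((z (Suc nm) - 1) / 2)\<^sup>2"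
      unfolding nz_def w_def nv'_def
      using norm_power2_coords[OF e coords] \<open>rho > 0\<close> by (simp add: diff_divide_distrib power_mult_distrib)
    finally have rows: "(\<Sum>l<k' nc. ((\<Sum>j<nz. M' nc l j * z j) + nv' nc l)\<^sup>2) = \<dots>" .
    have rhs: "(\<Sum>j<nz. p' nc j * z j) + q' nc = (z (Suc nm) + 1) / 2"
      using nz_bounds by (simp add: p'_def q'_def sum_indicator_mult)
    have J_nonneg: "0 \<le> ?J (u, z nm)"
      using \<open>rho > 0\<close> by simp
    have old: "socp_feasible nz nc k' M' nv' p' q' z \<longleftrightarrow> (u, z nm) \<in> F"
      using F[OF coords] zeros unfolding nz_def socp_feasible_def k'_def M'_def nv'_def p'_def q'_def
      by simp
    have "socp_feasible nz (Suc nc) k' M' nv' p' q' z \<longleftrightarrow> socp_feasible nz nc k' M' nv' p' q' z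
        \<and> sqrt (\<Sum>l<k' nc. ((\<Sum>j<nz. M' nc l j * z j) + nv' nc l)\<^sup>2) \<le> (\<Sum>j<nz. p' nc j * z j) + q' nc"
      unfolding socp_feasible_def less_Suc_eq by blast
    then show ?thesis
      unfolding old rows rhs rotated_cone_iff[OF J_nonneg] .
  qed
  then show ?thesis
    unfolding nz_def by (rule socp_equivalent_if_epigraph_socp[OF e])
qed

lemma socp_equivalent_two_cones_quadratic_cost:
  fixes gV gH :: "nat \<Rightarrow> real^('m::finite option)" and cV cH :: "real^('m option)"
  assumes "rho > 0"
  shows "socp_equivalent
     {(u, d). sqrt (\<Sum>l<KV. (gV l \<bullet> aug u)\<^sup>2) \<le> d - cV \<bullet> aug u
              \<and> sqrt (\<Sum>l<KH. (gH l \<bullet> aug u)\<^sup>2) \<le> cH \<bullet> aug u}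
     (\<lambda>(u, d). (norm u)\<^sup>2 + rho * d\<^sup>2)"
    (is "socp_equivalent ?F _")
proof -
  obtain e where e: "bij_betw e {..<CARD('m)} (UNIV :: 'm set)"
    using ex_bij_betw_nat_finite[of "UNIV :: 'm set"] by (auto simp: atLeast0LessThan)
  define nm where "nm = CARD('m)"
  define nz where "nz = Suc (Suc nm)"
  define lin :: "real^('m option) \<Rightarrow> nat \<Rightarrow> real"
    where "lin c j = (if j < nm then c $ Some (e j) else 0)" for c j
  define k :: "nat \<Rightarrow> nat" where "k i = (if i = 0 then KV else KH)" for i
  define M :: "nat \<Rightarrow> nat \<Rightarrow> nat \<Rightarrow> real"
    where "M i l j = (if i = 0 then lin (gV l) j else lin (gH l) j)" for i l j
  define nv :: "nat \<Rightarrow> nat \<Rightarrow> real"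
    where "nv i l = (if i = 0 then gV l $ None else gH l $ None)" for i l
  define p :: "nat \<Rightarrow> nat \<Rightarrow> real"
    where "p i j = (if i = 0 then (if j = nm then 1 else 0) - lin cV j else lin cH j)" for i j
  define q :: "nat \<Rightarrow> real" where "q i = (if i = 0 then - cV $ None else cH $ None)" for i
  have "socp_feasible nz 2 k M nv p q z \<longleftrightarrow> (u, z nm) \<in> ?F"
    if coords: "\<forall>a<nm. u $ e a = z a" and zeros: "\<forall>j\<ge>nz. z j = 0" for u z
  proof -
    have lin_aug: "(\<Sum>j<nz. lin c j * z j) + c $ None = c \<bullet> aug u" for c
      using inner_aug_coords[OF e[folded nm_def] coords] unfolding nz_def lin_def by simp
    have rhs0: "(\<Sum>j<nz. p 0 j * z j) + q 0 = z nm - cV \<bullet> aug u"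
      using lin_aug[of cV] unfolding nz_def
      by (simp add: p_def q_def left_diff_distrib sum_subtractf sum_indicator_mult)
    have "(\<forall>i<2. P i) \<longleftrightarrow> P 0 \<and> P (1 :: nat)" for P
      by (auto simp: numeral_2_eq_2 less_Suc_eq)
    then show ?thesis
      using zeros rhs0
      unfolding socp_feasible_def by (simp add: k_def M_def nv_def p_def q_def lin_aug)
  qed
  then show ?thesis
    unfolding nz_def nm_def by (rule socp_equivalent_add_quadratic_cost[OF e \<open>rho > 0\<close>])
qed

theorem theorem1:
  fixes Xs :: "(real^'n) set" and Reg :: "nat \<Rightarrow> (real^'n) set" and R r :: nat
    and fh :: "real^'n \<Rightarrow> real^'n" and gh :: "real^'n \<Rightarrow> real^'m^'n"
    and V h :: "real^'n \<Rightarrow> real"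
    and kV kh :: "'m option \<Rightarrow> real^'n \<Rightarrow> real^'n \<Rightarrow> real"
    and X :: "'N::finite \<Rightarrow> real^'n" and Y :: "'N \<Rightarrow> real^('m option)"
    and omegaV omegah :: "real^'N" and sn2 :: real
    and x :: "real^'n" and rho lam beta :: real and alpha :: "real \<Rightarrow> real" and a :: ereal
  assumes "compact Xs" and "convex Xs"
    and "\<forall>i\<in>{1..R}. \<forall>j\<in>{1..R}. i \<noteq> j \<longrightarrow> Reg i \<inter> Reg j = {}"
    and "(\<Union>i\<in>{1..R}. Reg i) = Xs"
    and "r \<in> {1..R}" and "x \<in> Reg r"
    and "locally_lipschitz fh" and "locally_lipschitz gh"
    and "C1_on Xs V" and "C1_on UNIV h"
    and "\<forall>l. pd_kernel (Reg r) (kV l)" and "\<forall>l. pd_kernel (Reg r) (kh l)"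
    and "\<forall>j. X j \<in> Reg r" and "\<forall>j. Y j $ None = 1"
    and "sn2 > 0"
    and "rho > 0" and "lam > 0" and "beta \<ge> 0" and "class_K a alpha"
  defines "F \<equiv> {(u, d). nominal_deriv V fh gh x u + gp_mean kV X Y omegaV sn2 x (aug u)
                           + beta * gp_sd kV X Y sn2 x (aug u) + lam * V x \<le> d
                      \<and> nominal_deriv h fh gh x u + gp_mean kh X Y omegah sn2 x (aug u)
                           - beta * gp_sd kh X Y sn2 x (aug u) + alpha (h x) \<ge> 0}"
    and "J \<equiv> (\<lambda>(u :: real^'m, d :: real). (norm u)\<^sup>2 + rho * d\<^sup>2)"
  shows "convex F \<and> convex_on F J \<and> socp_equivalent F J"
proof -
  have "x \<in> Xs"
    using assms(4-6) by blast
  obtain cV where cV: "\<forall>u. nominal_deriv V fh gh x u + gp_mean kV X Y omegaV sn2 x (aug u) + lam * V x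
                          = cV \<bullet> aug u"
    using nominal_deriv_add_gp_mean_linear_in_aug
      [OF C1_on_linear_frechet_derivative[OF \<open>C1_on Xs V\<close> \<open>x \<in> Xs\<close>]] by blast
  obtain cH where cH: "\<forall>u. nominal_deriv h fh gh x u + gp_mean kh X Y omegah sn2 x (aug u) + alpha (h x)
                          = cH \<bullet> aug u"
    using nominal_deriv_add_gp_mean_linear_in_aug
      [OF C1_on_linear_frechet_derivative[OF \<open>C1_on UNIV h\<close> UNIV_I]] by blast
  obtain gV :: "nat \<Rightarrow> real^('m option)" and KV
    where gV: "\<forall>y. beta * gp_sd kV X Y sn2 x y = sqrt (\<Sum>l<KV. (gV l \<bullet> y)\<^sup>2)"
    using scaled_gp_sd_eq_sqrt_sum_squares[OF assms(11,6,13,15,18)] by blast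
  obtain gH :: "nat \<Rightarrow> real^('m option)" and KH
    where gH: "\<forall>y. beta * gp_sd kh X Y sn2 x y = sqrt (\<Sum>l<KH. (gH l \<bullet> y)\<^sup>2)"
    using scaled_gp_sd_eq_sqrt_sum_squares[OF assms(12,6,13,15,18)] by blast
  have "F = {(u, d). sqrt (\<Sum>l<KV. (gV l \<bullet> aug u)\<^sup>2) \<le> d - cV \<bullet> aug u
                   \<and> sqrt (\<Sum>l<KH. (gH l \<bullet> aug u)\<^sup>2) \<le> cH \<bullet> aug u}"
    unfolding F_def cV[rule_format, symmetric] cH[rule_format, symmetric]
      gV[rule_format, symmetric] gH[rule_format, symmetric]
    by (auto simp: algebra_simps)
  then have "socp_equivalent F J"
    unfolding J_def using socp_equivalent_two_cones_quadratic_cost[OF \<open>rho > 0\<close>] by simp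
  then show ?thesis
    using socp_equivalent_convex by blast
qed

end
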